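(* Let $\delta>0$, $T\ge2$, and suppose the step sizes are $\eta_k=\dfrac{1}{\delta\log T\log(k+3)\sqrt{k+1}}$. For $1\le t\le T$ let $u_t:=\max\{0,\lceil\log(C\sqrt t)/\log(1/\alpha)\rceil\}$ (so that $C\alpha^{u_t}\le1/\sqrt t$). Then \begin{align*} \mathbb E\Big[\sum_{k=0}^{t-1}\eta_k\langle\boldsymbol b_k,\boldsymbol\theta_k-\boldsymbol\theta^*\rangle\Big] &\le 8C\,\mathbb E\Big[d_0\ell_0\sum_{k=0}^{u_t}\frac{1}{\delta\log T\log(k+3)\sqrt{k+1}}\Big] +8\,\mathbb E\Big[\sum_{k=u_t+1}^{t-1}\frac{d_{k-u_t}\ell_{k-u_t}}{\delta\log T\log(k+3)\sqrt{k+1}\sqrt t}\Big]\\ &\quad+\frac{2}{\delta^2\log^2T}\,\mathbb E\Big[\sum_{k=0}^{u_t}\frac{\ell_k+2\phi_\infty^2d_0}{\sqrt{k+1}\log(k+3)}\sum_{i=1}^{k}\frac{\ell_{i-1}}{\log(i+2)\sqrt i}\Big]\\ &\quad+\frac{2}{\delta^2\log^2T}\,\mathbb E\Big[\sum_{k=u_t+1}^{t-1}\frac{\ell_k+2\phi_\infty^2d_{k-u_t}}{\log(k+3)\log(k-u_t+3)\sqrt{k+1}}\sum_{i=k-u_t+1}^{k}\frac{\ell_{i-1}}{\sqrt i}\Big]. \end{align*}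
   Context: Setting. $\mathcal S$ finite; $\boldsymbol P$ irreducible aperiodic with stationary distribution $\boldsymbol\pi$; $C>0,\alpha\in(0,1)$ with $\|\boldsymbol P^t(s,\cdot)-\boldsymbol\pi\|_{\mathrm{TV}}\le C\alpha^t$ for all $s,t$. Rewards $0\le r(s,s')\le r_\infty$, discount $\gamma\in(0,1)$, features $\|\boldsymbol\phi(s)\|_2\le\phi_\infty$, $\boldsymbol\theta^*$ the TD fixed point ($\bar{\boldsymbol g}(\boldsymbol\theta^* )=0$). For $o=(s,s')$, $\boldsymbol g(\boldsymbol\theta,o)=(r(s,s')+\gamma\boldsymbol\phi(s')^\top\boldsymbol\theta-\boldsymbol\phi(s)^\top\boldsymbol\theta)\boldsymbol\phi(s)$, $\bar{\boldsymbol g}(\boldsymbol\theta)=\sum_{s,s'}\pi(s)P(s,s')\boldsymbol g(\boldsymbol\theta,(s,s'))$. Trajectory $s_0,s_1,\dots$, $O_t=(s_t,s_{t+1})$, $\mathcal F_t=\sigma(O_0,\dots,O_t)$. TD(0): $\boldsymbol\theta_0=0$, $\boldsymbol\theta_{t+1}=\boldsymbol\theta_t+\eta_t\boldsymbol g(\boldsymbol\theta_t,O_t)$. Notation: $d_t=\|\boldsymbol\theta_t-\boldsymbol\theta^*\|_2$, $\ell_t=r_\infty\phi_\infty+2\phi_\infty^2\|\boldsymbol\theta_t\|_2$, $\boldsymbol b_t=\mathbb E[\boldsymbol g(\boldsymbol\theta_t,O_t)\mid\mathcal F_{t-1}]-\bar{\boldsymbol g}(\boldsymbol\theta_t)$.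 Logarithms natural; empty sums are $0$. *)

theory Defs
  imports "HOL-Analysis.Analysis"
begin

definition stochastic :: "('s::finite \<Rightarrow> 's \<Rightarrow> real) \<Rightarrow> bool" where
  "stochastic P \<longleftrightarrow> (\<forall>s s'. 0 \<le> P s s') \<and> (\<forall>s. (\<Sum>s'\<in>UNIV. P s s') = 1)"

fun mpow :: "('s::finite \<Rightarrow> 's \<Rightarrow> real) \<Rightarrow> nat \<Rightarrow> 's \<Rightarrow> 's \<Rightarrow> real" where
  "mpow P 0 = (\<lambda>s s'. if s = s' then 1 else 0)"
| "mpow P (Suc n) = (\<lambda>s s'. \<Sum>u\<in>UNIV. mpow P n s u * P u s')"

definition irreducible_chain :: "('s::finite \<Rightarrow> 's \<Rightarrow> real) \<Rightarrow> bool" where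
  "irreducible_chain P \<longleftrightarrow> (\<forall>s s'. \<exists>n. mpow P n s s' > 0)"

definition aperiodic_chain :: "('s::finite \<Rightarrow> 's \<Rightarrow> real) \<Rightarrow> bool" where
  "aperiodic_chain P \<longleftrightarrow> (\<forall>s. Gcd {n::nat. n \<ge> 1 \<and> mpow P n s s > 0} = 1)"

definition stationary_dist :: "('s::finite \<Rightarrow> 's \<Rightarrow> real) \<Rightarrow> ('s \<Rightarrow> real) \<Rightarrow> bool" where
  "stationary_dist P \<pi> \<longleftrightarrow> (\<forall>s. 0 \<le> \<pi> s) \<and> (\<Sum>s\<in>UNIV. \<pi> s) = 1 \<and>
     (\<forall>s'. (\<Sum>s\<in>UNIV. \<pi> s * P s s') = \<pi> s')"

text \<open>Total variation distance of distributions on a finite set: sup over events = half the L1 distance.\<close>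
definition tv_dist :: "('s::finite \<Rightarrow> real) \<Rightarrow> ('s \<Rightarrow> real) \<Rightarrow> real" where
  "tv_dist \<mu> \<nu> = (\<Sum>s\<in>UNIV. \<bar>\<mu> s - \<nu> s\<bar>) / 2"

definition td_g :: "('s \<Rightarrow> 's \<Rightarrow> real) \<Rightarrow> real \<Rightarrow> ('s \<Rightarrow> 'v::euclidean_space) \<Rightarrow> 'v \<Rightarrow> 's \<times> 's \<Rightarrow> 'v" where
  "td_g r \<gamma> \<phi> \<theta> o' = (case o' of (s, s') \<Rightarrow>
      (r s s' + \<gamma> * (\<phi> s' \<bullet> \<theta>) - \<phi> s \<bullet> \<theta>) *\<^sub>R \<phi> s)"

definition td_gbar :: "('s::finite \<Rightarrow> real) \<Rightarrow> ('s \<Rightarrow> 's \<Rightarrow> real) \<Rightarrow> ('s \<Rightarrow> 's \<Rightarrow> real) \<Rightarrow> real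
     \<Rightarrow> ('s \<Rightarrow> 'v::euclidean_space) \<Rightarrow> 'v \<Rightarrow> 'v" where
  "td_gbar \<pi> P r \<gamma> \<phi> \<theta> = (\<Sum>s\<in>UNIV. \<Sum>s'\<in>UNIV. (\<pi> s * P s s') *\<^sub>R td_g r \<gamma> \<phi> \<theta> (s, s'))"

text \<open>TD(0) iterates along a trajectory \<omega> (\<omega> k = s_k); O_k = (s_k, s_{k+1}).\<close>
fun td_theta :: "('s \<Rightarrow> 's \<Rightarrow> real) \<Rightarrow> real \<Rightarrow> ('s \<Rightarrow> 'v::euclidean_space) \<Rightarrow> (nat \<Rightarrow> real)
     \<Rightarrow> (nat \<Rightarrow> 's) \<Rightarrow> nat \<Rightarrow> 'v" where
  "td_theta r \<gamma> \<phi> \<eta> \<omega> 0 = 0"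
| "td_theta r \<gamma> \<phi> \<eta> \<omega> (Suc k) =
     td_theta r \<gamma> \<phi> \<eta> \<omega> k + \<eta> k *\<^sub>R td_g r \<gamma> \<phi> (td_theta r \<gamma> \<phi> \<eta> \<omega> k) (\<omega> k, \<omega> (Suc k))"

text \<open>b_k = E[g(theta_k,O_k) | F_{k-1}] - gbar(theta_k). For k \<ge> 1, F_{k-1} = sigma(s_0..s_k) and by
  the Markov property the conditional expectation is the one-step average from s_k; for k = 0,
  F_{-1} is trivial and the expectation is over s_0 ~ mu0 (theta_0 = 0 is deterministic).\<close>
definition td_bias :: "('s::finite \<Rightarrow> real) \<Rightarrow> ('s \<Rightarrow> 's \<Rightarrow> real) \<Rightarrow> ('s \<Rightarrow> real) \<Rightarrow> ('s \<Rightarrow> 's \<Rightarrow> real)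
     \<Rightarrow> real \<Rightarrow> ('s \<Rightarrow> 'v::euclidean_space) \<Rightarrow> (nat \<Rightarrow> real) \<Rightarrow> (nat \<Rightarrow> 's) \<Rightarrow> nat \<Rightarrow> 'v" where
  "td_bias \<mu>0 P \<pi> r \<gamma> \<phi> \<eta> \<omega> k =
     (if k = 0 then (\<Sum>s\<in>UNIV. \<Sum>s'\<in>UNIV. (\<mu>0 s * P s s') *\<^sub>R td_g r \<gamma> \<phi> (td_theta r \<gamma> \<phi> \<eta> \<omega> 0) (s, s'))
      else (\<Sum>s'\<in>UNIV. P (\<omega> k) s' *\<^sub>R td_g r \<gamma> \<phi> (td_theta r \<gamma> \<phi> \<eta> \<omega> k) (\<omega> k, s')))
     - td_gbar \<pi> P r \<gamma> \<phi> (td_theta r \<gamma> \<phi> \<eta> \<omega> k)"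

definition traj_exp :: "('s::finite \<Rightarrow> real) \<Rightarrow> ('s \<Rightarrow> 's \<Rightarrow> real) \<Rightarrow> nat \<Rightarrow> ((nat \<Rightarrow> 's) \<Rightarrow> real) \<Rightarrow> real" where
  "traj_exp \<mu>0 P N f =
     (\<Sum>\<omega>\<in>PiE {..N} (\<lambda>_. UNIV). (\<mu>0 (\<omega> 0) * (\<Prod>i<N. P (\<omega> i) (\<omega> (Suc i)))) * f \<omega>)"

definition stepsize :: "real \<Rightarrow> nat \<Rightarrow> nat \<Rightarrow> real" where
  "stepsize \<delta> T k = 1 / (\<delta> * ln (real T) * ln (real k + 3) * sqrt (real k + 1))"

definition mix_u :: "real \<Rightarrow> real \<Rightarrow> nat \<Rightarrow> nat" where
  "mix_u C \<alpha> t = nat (max 0 \<lceil>ln (C * sqrt (real t)) / ln (1 / \<alpha>)\<rceil>)"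

end

(* The bias b_k is controlled by comparing theta_k with an earlier iterate theta_j, where
   j = 0 for k <= u_t and j = k - u_t otherwise.  The parameter theta_j is a function of
   s_0, ..., s_j only, so by the Markov property its bias at time k is an average of the
   one-step bias over P^(k-j)(s_j, .), of size at most 2 C alpha^(k-j) l_j by geometric
   mixing; and C alpha^(u_t) <= 1/sqrt t by the choice of u_t.  Replacing theta_j by theta_k
   costs the drift |theta_k - theta_j| <= sum_{i=j}^{k-1} eta_i l_i, weighted by the size and
   the Lipschitz constant of the one-step bias. *)

theory Submission
  imports Defs
begin

section \<open>Trajectory expectations and the Markov property\<close>

definition depends_upto :: "nat \<Rightarrow> ((nat \<Rightarrow> 's) \<Rightarrow> 'b) \<Rightarrow> bool" where
  "depends_upto k F \<longleftrightarrow> (\<forall>\<omega> \<omega>'. (\<forall>i\<le>k. \<omega> i = \<omega>' i) \<longrightarrow> F \<omega> = F \<omega>')"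

lemma depends_upto_mono: "depends_upto j F \<Longrightarrow> j \<le> k \<Longrightarrow> depends_upto k F"
  unfolding depends_upto_def by auto

lemma depends_upto_comp: "depends_upto k F \<Longrightarrow> depends_upto k (\<lambda>\<omega>. g (F \<omega>))"
  unfolding depends_upto_def by metis

lemma td_theta_depends_upto: "depends_upto k (\<lambda>\<omega>. td_theta r \<gamma> \<phi> \<eta> \<omega> k)"
proof (induction k)
  case (Suc k)
  show ?case unfolding depends_upto_def
  proof (intro allI impI)
    fix \<omega> \<omega>' :: "nat \<Rightarrow> 'a"
    assume "\<forall>i\<le>Suc k. \<omega> i = \<omega>' i"
    moreover from this have "td_theta r \<gamma> \<phi> \<eta> \<omega> k = td_theta r \<gamma> \<phi> \<eta> \<omega>' k"
      using Suc.IH unfolding depends_upto_def by simp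
    ultimately show "td_theta r \<gamma> \<phi> \<eta> \<omega> (Suc k) = td_theta r \<gamma> \<phi> \<eta> \<omega>' (Suc k)"
      by simp
  qed
qed (simp add: depends_upto_def)

lemma mpow_row_sum: "stochastic P \<Longrightarrow> (\<Sum>s\<in>UNIV. mpow P n x s) = 1"
proof (induction n)
  case (Suc n)
  have "(\<Sum>s\<in>UNIV. mpow P (Suc n) x s) = (\<Sum>u\<in>UNIV. mpow P n x u * (\<Sum>s\<in>UNIV. P u s))"
    by (simp add: sum_distrib_left) (rule sum.swap)
  with Suc show ?case by (simp add: stochastic_def)
qed simp

lemma sum_mpow_0: "(\<Sum>s\<in>UNIV. mpow P 0 x s * F s) = (F x :: real)"
proof -
  have "mpow P 0 x s * F s = (if x = s then F s else 0)" for s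
    by simp
  then show ?thesis by simp
qed

lemma sum_mpow_Suc:
  "(\<Sum>x\<in>UNIV. mpow P n y x * (\<Sum>s\<in>UNIV. P x s * F s)) = (\<Sum>s\<in>UNIV. mpow P (Suc n) y s * (F s :: real))"
  by (simp add: sum_distrib_left sum_distrib_right mult.assoc) (rule sum.swap)

lemma traj_exp_add: "traj_exp \<mu>0 P N (\<lambda>\<omega>. f \<omega> + g \<omega>) = traj_exp \<mu>0 P N f + traj_exp \<mu>0 P N g"
  unfolding traj_exp_def by (simp add: distrib_left sum.distrib)

lemma traj_exp_cmult: "traj_exp \<mu>0 P N (\<lambda>\<omega>. c * f \<omega>) = c * traj_exp \<mu>0 P N f"
  unfolding traj_exp_def by (simp add: sum_distrib_left mult.left_commute)

lemma traj_exp_sum: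
  "finite K \<Longrightarrow> traj_exp \<mu>0 P N (\<lambda>\<omega>. \<Sum>k\<in>K. f k \<omega>) = (\<Sum>k\<in>K. traj_exp \<mu>0 P N (f k))"
  unfolding traj_exp_def by (simp add: sum_distrib_left) (rule sum.swap)

lemma traj_exp_mono:
  assumes "stochastic P" "\<forall>s. 0 \<le> \<mu>0 s" "\<And>\<omega>. f \<omega> \<le> g \<omega>"
  shows "traj_exp \<mu>0 P N f \<le> traj_exp \<mu>0 P N g"
  unfolding traj_exp_def
proof (rule sum_mono)
  fix \<omega> :: "nat \<Rightarrow> 'a"
  have "0 \<le> \<mu>0 (\<omega> 0) * (\<Prod>i<N. P (\<omega> i) (\<omega> (Suc i)))"
    using assms(1,2) unfolding stochastic_def by (intro mult_nonneg_nonneg prod_nonneg) auto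
  then show "\<mu>0 (\<omega> 0) * (\<Prod>i<N. P (\<omega> i) (\<omega> (Suc i))) * f \<omega>
      \<le> \<mu>0 (\<omega> 0) * (\<Prod>i<N. P (\<omega> i) (\<omega> (Suc i))) * g \<omega>"
    by (intro mult_left_mono assms(3))
qed

lemma traj_exp_nonneg:
  assumes "stochastic P" "\<forall>s. 0 \<le> \<mu>0 s" "\<And>\<omega>. 0 \<le> f \<omega>"
  shows "0 \<le> traj_exp \<mu>0 P N f"
  using traj_exp_mono[OF assms(1,2), of "\<lambda>_. 0" f N] assms(3) by (simp add: traj_exp_def)

lemma traj_exp_Suc:
  fixes G :: "(nat \<Rightarrow> 's::finite) \<Rightarrow> 's \<Rightarrow> real"
  assumes "\<And>y. depends_upto k (\<lambda>\<omega>. G \<omega> y)"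
  shows "traj_exp \<mu>0 P (Suc k) (\<lambda>\<omega>. G \<omega> (\<omega> (Suc k))) =
         traj_exp \<mu>0 P k (\<lambda>\<omega>. \<Sum>s\<in>UNIV. P (\<omega> k) s * G \<omega> s)"
proof -
  let ?w = "\<lambda>N (\<omega>::nat\<Rightarrow>'s). \<mu>0 (\<omega> 0) * (\<Prod>i<N. P (\<omega> i) (\<omega> (Suc i)))"
  let ?ext = "\<lambda>(y, g). g(Suc k := y)"
  have "{..Suc k} = insert (Suc k) {..k}" by auto
  then have paths: "Pi\<^sub>E {..Suc k} (\<lambda>_. UNIV) = ?ext ` (UNIV \<times> Pi\<^sub>E {..k} (\<lambda>_. UNIV))"
    by (simp add: PiE_insert_eq)
  have inj: "inj_on ?ext (UNIV \<times> Pi\<^sub>E {..k} (\<lambda>_. (UNIV::'s set)))"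
    using inj_combinator[of "Suc k" "{..k}" "\<lambda>_. UNIV :: 's set"] by simp
  have step: "?w (Suc k) (g(Suc k := y)) * G (g(Suc k := y)) y = ?w k g * (P (g k) y * G g y)" for g y
  proof -
    have "G (g(Suc k := y)) y = G g y"
      using assms[of y] unfolding depends_upto_def by auto
    then show ?thesis by (simp add: prod.lessThan_Suc)
  qed
  have "traj_exp \<mu>0 P (Suc k) (\<lambda>\<omega>. G \<omega> (\<omega> (Suc k)))
      = (\<Sum>(y, g)\<in>UNIV \<times> Pi\<^sub>E {..k} (\<lambda>_. UNIV). ?w (Suc k) (g(Suc k := y)) * G (g(Suc k := y)) y)"
    unfolding traj_exp_def paths sum.reindex[OF inj] by (simp add: case_prod_unfold)
  also have "\<dots> = (\<Sum>(y, g)\<in>UNIV \<times> Pi\<^sub>E {..k} (\<lambda>_. UNIV). ?w k g * (P (g k) y * G g y))"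
    by (intro sum.cong refl) (simp only: split_beta step)
  also have "\<dots> = (\<Sum>g\<in>Pi\<^sub>E {..k} (\<lambda>_. UNIV). ?w k g * (\<Sum>s\<in>UNIV. P (g k) s * G g s))"
    by (simp add: sum.cartesian_product[symmetric] sum_distrib_left) (rule sum.swap)
  finally show ?thesis unfolding traj_exp_def .
qed

lemma traj_exp_truncate:
  assumes "stochastic P" "depends_upto k f" "k \<le> N"
  shows "traj_exp \<mu>0 P N f = traj_exp \<mu>0 P k f"
  using assms(3)
proof (induction N)
  case (Suc N)
  show ?case
  proof (cases "k = Suc N")
    case False
    then have "k \<le> N" using Suc.prems by simp
    then have "traj_exp \<mu>0 P (Suc N) f = traj_exp \<mu>0 P N (\<lambda>\<omega>. (\<Sum>s\<in>UNIV. P (\<omega> N) s) * f \<omega>)"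
      using traj_exp_Suc[of N "\<lambda>\<omega> y. f \<omega>" \<mu>0 P] depends_upto_mono[OF assms(2)]
      by (simp add: sum_distrib_right)
    with assms(1) Suc.IH \<open>k \<le> N\<close> show ?thesis by (simp add: stochastic_def)
  qed simp
qed simp

lemma traj_exp_markov_horizon:
  fixes F :: "(nat \<Rightarrow> 's::finite) \<Rightarrow> 's \<Rightarrow> real"
  assumes "\<And>y. depends_upto j (\<lambda>\<omega>. F \<omega> y)" "j \<le> k"
  shows "traj_exp \<mu>0 P k (\<lambda>\<omega>. F \<omega> (\<omega> k)) =
         traj_exp \<mu>0 P j (\<lambda>\<omega>. \<Sum>s\<in>UNIV. mpow P (k - j) (\<omega> j) s * F \<omega> s)"
  using assms(2,1)
proof (induction k arbitrary: F)
  case 0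
  then show ?case by (simp only: sum_mpow_0 le_zero_eq diff_self_eq_0)
next
  case (Suc k)
  show ?case
  proof (cases "j = Suc k")
    case False
    then have "j \<le> k" using Suc.prems by simp
    have "depends_upto j (\<lambda>\<omega>. \<Sum>s\<in>UNIV. P y s * F \<omega> s)" for y
      using Suc.prems(2) unfolding depends_upto_def by (intro allI impI sum.cong refl) metis
    then have "traj_exp \<mu>0 P k (\<lambda>\<omega>. \<Sum>s\<in>UNIV. P (\<omega> k) s * F \<omega> s) =
      traj_exp \<mu>0 P j (\<lambda>\<omega>. \<Sum>x\<in>UNIV. mpow P (k - j) (\<omega> j) x * (\<Sum>s\<in>UNIV. P x s * F \<omega> s))"
      by (rule Suc.IH[OF \<open>j \<le> k\<close>])
    moreover have "depends_upto k (\<lambda>\<omega>. F \<omega> y)" for y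
      using depends_upto_mono[OF Suc.prems(2) \<open>j \<le> k\<close>] .
    moreover have "Suc k - j = Suc (k - j)" using \<open>j \<le> k\<close> by simp
    ultimately show ?thesis
      using traj_exp_Suc[of k F] by (simp only: sum_mpow_Suc)
  qed (simp only: sum_mpow_0 diff_self_eq_0)
qed

lemma traj_exp_markov:
  fixes F :: "(nat \<Rightarrow> 's::finite) \<Rightarrow> 's \<Rightarrow> real"
  assumes "stochastic P" "\<And>y. depends_upto j (\<lambda>\<omega>. F \<omega> y)" "j \<le> k" "k \<le> N"
  shows "traj_exp \<mu>0 P N (\<lambda>\<omega>. F \<omega> (\<omega> k)) =
         traj_exp \<mu>0 P N (\<lambda>\<omega>. \<Sum>s\<in>UNIV. mpow P (k - j) (\<omega> j) s * F \<omega> s)"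
proof -
  have "depends_upto k (\<lambda>\<omega>. F \<omega> (\<omega> k))"
    using assms(2,3) unfolding depends_upto_def by (metis order_refl order_trans)
  moreover have "depends_upto j (\<lambda>\<omega>. \<Sum>s\<in>UNIV. mpow P (k - j) (\<omega> j) s * F \<omega> s)"
    using assms(2) unfolding depends_upto_def by (intro allI impI sum.cong refl) (metis order_refl)
  ultimately show ?thesis
    using traj_exp_truncate[OF assms(1) _ assms(4)] traj_exp_truncate[OF assms(1) _ order_trans[OF assms(3,4)]]
      traj_exp_markov_horizon[OF assms(2,3)] by simp
qed

section \<open>Step sizes\<close>

lemma stepsize_pos: "0 < \<delta> \<Longrightarrow> 2 \<le> T \<Longrightarrow> 0 < stepsize \<delta> T k"
  unfolding stepsize_def by (intro divide_pos_pos mult_pos_pos) auto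

lemma sum_stepsize_eq:
  "(\<Sum>i=0..<k. stepsize \<delta> T i * l i) =
   1 / (\<delta> * ln (real T)) * (\<Sum>i=1..k. l (i - 1) / (ln (real i + 2) * sqrt (real i)))"
proof -
  have "(\<Sum>i=1..k. l (i - 1) / (ln (real i + 2) * sqrt (real i))) =
        (\<Sum>i=0..<k. l i / (ln (real i + 3) * sqrt (real i + 1)))"
    unfolding atLeastLessThanSuc_atLeastAtMost[symmetric] One_nat_def sum.atLeast_Suc_lessThan_Suc_shift
    by (simp add: add.commute add.left_commute numeral_3_eq_3 numeral_2_eq_2)
  then show ?thesis
    unfolding stepsize_def by (simp add: sum_distrib_left mult.assoc)
qed

lemma sum_stepsize_le:
  assumes "0 < \<delta>" "2 \<le> T" "\<And>i. 0 \<le> l i"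
  shows "(\<Sum>i=j..<k. stepsize \<delta> T i * l i)
    \<le> 1 / (\<delta> * ln (real T) * ln (real j + 3)) * (\<Sum>i=j+1..k. l (i - 1) / sqrt (real i))"
proof -
  have "stepsize \<delta> T i * l i \<le> 1 / (\<delta> * ln (real T) * ln (real j + 3)) * (l i / sqrt (real i + 1))"
    if "j \<le> i" for i
  proof -
    have "stepsize \<delta> T i * l i = l i / (\<delta> * ln (real T) * ln (real i + 3) * sqrt (real i + 1))"
      unfolding stepsize_def by simp
    also have "\<dots> \<le> l i / (\<delta> * ln (real T) * ln (real j + 3) * sqrt (real i + 1))"
      using assms that
      by (intro divide_left_mono mult_right_mono mult_left_mono mult_pos_pos) auto
    finally show ?thesis by simp
  qed
  then have "(\<Sum>i=j..<k. stepsize \<delta> T i * l i)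
      \<le> (\<Sum>i=j..<k. 1 / (\<delta> * ln (real T) * ln (real j + 3)) * (l i / sqrt (real i + 1)))"
    by (intro sum_mono) simp
  also have "\<dots> = 1 / (\<delta> * ln (real T) * ln (real j + 3)) * (\<Sum>i=j+1..k. l (i - 1) / sqrt (real i))"
    unfolding Suc_eq_plus1[symmetric] atLeastLessThanSuc_atLeastAtMost[symmetric] sum.atLeast_Suc_lessThan_Suc_shift
    by (simp add: sum_distrib_left add.commute)
  finally show ?thesis .
qed

lemma early_step_bound:
  fixes l :: "nat \<Rightarrow> real"
  assumes "0 < \<delta>" "2 \<le> T" "\<And>i. 0 \<le> l i" "0 \<le> d0" "0 < C" "0 \<le> a" "a \<le> 1"
  shows "stepsize \<delta> T k * (2 * C * a * l 0 * d0 + (2 * l k + 4 * p * d0) * (\<Sum>i=0..<k. stepsize \<delta> T i * l i))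
    \<le> 8 * C * (d0 * l 0 * (1 / (\<delta> * ln (real T) * ln (real k + 3) * sqrt (real k + 1))))
      + 2 / (\<delta>\<^sup>2 * (ln (real T))\<^sup>2) * ((l k + 2 * p * d0) / (sqrt (real k + 1) * ln (real k + 3)) *
          (\<Sum>i=1..k. l (i - 1) / (ln (real i + 2) * sqrt (real i))))"
proof -
  define e where "e = stepsize \<delta> T k"
  define S where "S = (\<Sum>i=1..k. l (i - 1) / (ln (real i + 2) * sqrt (real i)))"
  have e: "e = 1 / (\<delta> * ln (real T) * ln (real k + 3) * sqrt (real k + 1))"
    unfolding e_def stepsize_def ..
  have "0 \<le> C * l 0 * d0 * e"
    using assms(3)[of 0] assms(4,5) stepsize_pos[OF assms(1,2), of k] unfolding e_def by simp
  then have "(2 * a) * (C * l 0 * d0 * e) \<le> 8 * (C * l 0 * d0 * e)"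
    using assms(7) by (intro mult_right_mono) auto
  then have "e * (2 * C * a * l 0 * d0) \<le> 8 * C * (d0 * l 0 * e)"
    by (simp add: mult_ac)
  moreover have "e * ((2 * l k + 4 * p * d0) * (1 / (\<delta> * ln (real T)) * S))
      = 2 / (\<delta>\<^sup>2 * (ln (real T))\<^sup>2) * ((l k + 2 * p * d0) / (sqrt (real k + 1) * ln (real k + 3)) * S)"
    unfolding e using assms(1,2) by (simp add: field_simps power2_eq_square)
  ultimately show ?thesis
    unfolding sum_stepsize_eq S_def[symmetric] e_def[symmetric] e[symmetric] by (simp add: distrib_left)
qed

lemma late_step_bound:
  fixes l :: "nat \<Rightarrow> real"
  assumes "0 < \<delta>" "2 \<le> T" "\<And>i. 0 \<le> l i" "0 \<le> dj" "0 \<le> C * a" "C * a \<le> 1 / sqrt (real t)" "0 \<le> p"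
  shows "stepsize \<delta> T k * (2 * C * a * l j * dj + (2 * l k + 4 * p * dj) * (\<Sum>i=j..<k. stepsize \<delta> T i * l i))
    \<le> 8 * (dj * l j / (\<delta> * ln (real T) * ln (real k + 3) * sqrt (real k + 1) * sqrt (real t)))
      + 2 / (\<delta>\<^sup>2 * (ln (real T))\<^sup>2) * ((l k + 2 * p * dj) / (ln (real k + 3) * ln (real j + 3) * sqrt (real k + 1)) *
          (\<Sum>i=j+1..k. l (i - 1) / sqrt (real i)))"
proof -
  define e where "e = stepsize \<delta> T k"
  define S where "S = (\<Sum>i=j+1..k. l (i - 1) / sqrt (real i))"
  have e: "e = 1 / (\<delta> * ln (real T) * ln (real k + 3) * sqrt (real k + 1))"
    unfolding e_def stepsize_def ..
  have e_pos: "0 < e"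
    unfolding e_def using stepsize_pos[OF assms(1,2)] .
  have "C * a * (l j * dj) \<le> 1 / sqrt (real t) * (l j * dj)"
    using assms(3)[of j] assms(4,6) by (intro mult_right_mono) auto
  moreover have "0 \<le> 1 / sqrt (real t) * (l j * dj)"
    using assms(3)[of j] assms(4) by simp
  ultimately have "2 * C * a * l j * dj \<le> 8 * (1 / sqrt (real t) * (l j * dj))"
    by (simp add: mult.assoc)
  then have "e * (2 * C * a * l j * dj) \<le> e * (8 * (1 / sqrt (real t) * (l j * dj)))"
    using e_pos by (intro mult_left_mono) auto
  also have "\<dots> = 8 * (dj * l j / (\<delta> * ln (real T) * ln (real k + 3) * sqrt (real k + 1) * sqrt (real t)))"
    unfolding e by (simp add: field_simps)
  finally have mixing_part: "e * (2 * C * a * l j * dj) \<le> \<dots>" .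
  have "e * ((2 * l k + 4 * p * dj) * (\<Sum>i=j..<k. stepsize \<delta> T i * l i))
      \<le> e * ((2 * l k + 4 * p * dj) * (1 / (\<delta> * ln (real T) * ln (real j + 3)) * S))"
    unfolding S_def using assms e_pos
    by (intro mult_left_mono sum_stepsize_le) auto
  also have "\<dots> = 2 / (\<delta>\<^sup>2 * (ln (real T))\<^sup>2)
      * ((l k + 2 * p * dj) / (ln (real k + 3) * ln (real j + 3) * sqrt (real k + 1)) * S)"
    unfolding e using assms(1,2) by (simp add: field_simps power2_eq_square)
  finally show ?thesis
    using mixing_part unfolding e_def S_def by (simp add: distrib_left)
qed

lemma mix_u_geometric_le:
  assumes "0 < C" "0 < \<alpha>" "\<alpha> < 1" "1 \<le> t"
  shows "C * \<alpha> ^ mix_u C \<alpha> t \<le> 1 / sqrt (real t)"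
proof (cases "C * sqrt (real t) \<le> 1")
  case True
  have "C * \<alpha> ^ mix_u C \<alpha> t \<le> C"
    using assms by (simp add: mult_left_le power_le_one)
  also have "\<dots> \<le> 1 / sqrt (real t)"
    using True assms(4) by (simp add: field_simps)
  finally show ?thesis .
next
  case False
  have "log \<alpha> (C * sqrt (real t)) = - (ln (C * sqrt (real t)) / ln (1 / \<alpha>))"
    using assms by (simp add: log_def ln_div)
  moreover have "ln (C * sqrt (real t)) / ln (1 / \<alpha>) \<le> real (mix_u C \<alpha> t)"
    unfolding mix_u_def by linarith
  ultimately have "\<alpha> ^ mix_u C \<alpha> t \<le> \<alpha> powr (- log \<alpha> (C * sqrt (real t)))"
    using assms by (simp add: powr_realpow[symmetric] powr_mono')
  also have "\<dots> = 1 / (C * sqrt (real t))"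
    using assms False by (simp add: powr_minus_divide)
  finally show ?thesis
    using mult_left_mono[of _ _ C] assms(1) by fastforce
qed

section \<open>Bias of TD(0) under geometric mixing\<close>

lemma norm_convex_combination_le:
  fixes w :: "'a::finite \<Rightarrow> real" and v :: "'a \<Rightarrow> 'b::real_normed_vector"
  assumes "\<And>s. 0 \<le> w s" "(\<Sum>s\<in>UNIV. w s) = 1" "\<And>s. norm (v s) \<le> M"
  shows "norm (\<Sum>s\<in>UNIV. w s *\<^sub>R v s) \<le> M"
proof -
  have "norm (\<Sum>s\<in>UNIV. w s *\<^sub>R v s) \<le> (\<Sum>s\<in>UNIV. w s * M)"
    using assms(1,3) by (intro sum_norm_le) (simp add: mult_left_mono)
  also have "\<dots> = M" using assms(2) by (simp add: sum_distrib_right[symmetric])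
  finally show ?thesis .
qed

locale td_setting =
  fixes P :: "'s::finite \<Rightarrow> 's \<Rightarrow> real" and \<pi> \<mu>0 :: "'s \<Rightarrow> real"
    and r :: "'s \<Rightarrow> 's \<Rightarrow> real" and \<gamma> r_inf phi_inf C \<alpha> :: real
    and \<phi> :: "'s \<Rightarrow> 'v::euclidean_space"
  assumes stochastic: "stochastic P"
    and stationary: "stationary_dist P \<pi>"
    and init_nonneg: "\<forall>s. 0 \<le> \<mu>0 s" and init_sum: "(\<Sum>s\<in>UNIV. \<mu>0 s) = 1"
    and reward_bounds: "\<forall>s s'. 0 \<le> r s s' \<and> r s s' \<le> r_inf"
    and discount_pos: "0 < \<gamma>" and discount_less_1: "\<gamma> < 1"
    and feature_bound: "\<forall>s. norm (\<phi> s) \<le> phi_inf"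
    and mixing_const_pos: "0 < C" and mixing_rate_pos: "0 < \<alpha>" and mixing_rate_less_1: "\<alpha> < 1"
    and geometric_mixing: "\<forall>s n. tv_dist (mpow P n s) \<pi> \<le> C * \<alpha> ^ n"
begin

definition grad_bound :: "'v \<Rightarrow> real" where
  "grad_bound \<theta> = r_inf * phi_inf + 2 * phi_inf\<^sup>2 * norm \<theta>"

definition mean_update :: "'v \<Rightarrow> 's \<Rightarrow> 'v" where
  "mean_update \<theta> x = (\<Sum>s'\<in>UNIV. P x s' *\<^sub>R td_g r \<gamma> \<phi> \<theta> (x, s'))"

definition update_bias :: "'v \<Rightarrow> 's \<Rightarrow> 'v" where
  "update_bias \<theta> x = mean_update \<theta> x - td_gbar \<pi> P r \<gamma> \<phi> \<theta>"

lemma phi_inf_nonneg: "0 \<le> phi_inf"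
  using feature_bound norm_ge_zero order_trans by blast

lemma grad_bound_nonneg: "0 \<le> grad_bound \<theta>"
proof -
  have "0 \<le> r_inf"
    using reward_bounds order_trans by blast
  with phi_inf_nonneg show ?thesis unfolding grad_bound_def by simp
qed

lemma inner_feature_le: "\<bar>\<phi> s \<bullet> x\<bar> \<le> phi_inf * norm x"
  using Cauchy_Schwarz_ineq2[of "\<phi> s" x] feature_bound mult_right_mono norm_ge_zero order_trans
  by meson

lemma td_error_linear_part_le: "\<bar>\<gamma> * (\<phi> s' \<bullet> x) - \<phi> s \<bullet> x\<bar> \<le> 2 * phi_inf * norm x"
proof -
  have "\<bar>\<gamma> * (\<phi> s' \<bullet> x)\<bar> \<le> \<bar>\<phi> s' \<bullet> x\<bar>"
    using discount_pos discount_less_1 by (simp add: abs_mult mult_left_le_one_le)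
  then show ?thesis using inner_feature_le[of s' x] inner_feature_le[of s x] by linarith
qed

lemma td_g_norm_le: "norm (td_g r \<gamma> \<phi> \<theta> (s, s')) \<le> grad_bound \<theta>"
proof -
  have "\<bar>r s s' + \<gamma> * (\<phi> s' \<bullet> \<theta>) - \<phi> s \<bullet> \<theta>\<bar> \<le> r_inf + 2 * phi_inf * norm \<theta>"
    using td_error_linear_part_le[of s' \<theta> s] reward_bounds[rule_format, of s s']
    unfolding abs_le_iff by linarith
  then have "\<bar>r s s' + \<gamma> * (\<phi> s' \<bullet> \<theta>) - \<phi> s \<bullet> \<theta>\<bar> * norm (\<phi> s)
      \<le> (r_inf + 2 * phi_inf * norm \<theta>) * phi_inf"
    using feature_bound by (intro mult_mono) auto
  moreover have "norm (td_g r \<gamma> \<phi> \<theta> (s, s')) = \<bar>r s s' + \<gamma> * (\<phi> s' \<bullet> \<theta>) - \<phi> s \<bullet> \<theta>\<bar> * norm (\<phi> s)"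
    unfolding td_g_def by simp
  ultimately show ?thesis
    unfolding grad_bound_def by (simp add: algebra_simps power2_eq_square)
qed

lemma td_g_lipschitz:
  "norm (td_g r \<gamma> \<phi> \<theta> (s, s') - td_g r \<gamma> \<phi> \<theta>' (s, s')) \<le> 2 * phi_inf\<^sup>2 * norm (\<theta> - \<theta>')"
proof -
  have "td_g r \<gamma> \<phi> \<theta> (s, s') - td_g r \<gamma> \<phi> \<theta>' (s, s')
      = (\<gamma> * (\<phi> s' \<bullet> (\<theta> - \<theta>')) - \<phi> s \<bullet> (\<theta> - \<theta>')) *\<^sub>R \<phi> s"
    unfolding td_g_def by (simp add: algebra_simps inner_diff_right)
  moreover have "\<bar>\<gamma> * (\<phi> s' \<bullet> (\<theta> - \<theta>')) - \<phi> s \<bullet> (\<theta> - \<theta>')\<bar> * norm (\<phi> s)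
      \<le> (2 * phi_inf * norm (\<theta> - \<theta>')) * phi_inf"
    using td_error_linear_part_le feature_bound phi_inf_nonneg by (intro mult_mono) auto
  ultimately show ?thesis by (simp add: power2_eq_square mult_ac)
qed

lemma mean_update_norm_le: "norm (mean_update \<theta> x) \<le> grad_bound \<theta>"
  unfolding mean_update_def
  by (rule norm_convex_combination_le) (use stochastic td_g_norm_le in \<open>auto simp: stochastic_def\<close>)

lemma mean_update_lipschitz:
  "norm (mean_update \<theta> x - mean_update \<theta>' x) \<le> 2 * phi_inf\<^sup>2 * norm (\<theta> - \<theta>')"
proof -
  have "mean_update \<theta> x - mean_update \<theta>' x
      = (\<Sum>s'\<in>UNIV. P x s' *\<^sub>R (td_g r \<gamma> \<phi> \<theta> (x, s') - td_g r \<gamma> \<phi> \<theta>' (x, s')))"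
    unfolding mean_update_def by (simp add: sum_subtractf scaleR_diff_right)
  also have "norm \<dots> \<le> 2 * phi_inf\<^sup>2 * norm (\<theta> - \<theta>')"
    by (rule norm_convex_combination_le) (use stochastic td_g_lipschitz in \<open>auto simp: stochastic_def\<close>)
  finally show ?thesis .
qed

lemma td_gbar_eq_mean_update: "td_gbar \<pi> P r \<gamma> \<phi> \<theta> = (\<Sum>s\<in>UNIV. \<pi> s *\<^sub>R mean_update \<theta> s)"
  unfolding td_gbar_def mean_update_def by (simp add: scaleR_sum_right)

lemma td_gbar_norm_le: "norm (td_gbar \<pi> P r \<gamma> \<phi> \<theta>) \<le> grad_bound \<theta>"
  unfolding td_gbar_eq_mean_update
  by (rule norm_convex_combination_le)
    (use stationary mean_update_norm_le in \<open>auto simp: stationary_dist_def\<close>)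

lemma td_gbar_lipschitz:
  "norm (td_gbar \<pi> P r \<gamma> \<phi> \<theta> - td_gbar \<pi> P r \<gamma> \<phi> \<theta>') \<le> 2 * phi_inf\<^sup>2 * norm (\<theta> - \<theta>')"
proof -
  have "td_gbar \<pi> P r \<gamma> \<phi> \<theta> - td_gbar \<pi> P r \<gamma> \<phi> \<theta>'
      = (\<Sum>s\<in>UNIV. \<pi> s *\<^sub>R (mean_update \<theta> s - mean_update \<theta>' s))"
    unfolding td_gbar_eq_mean_update by (simp add: sum_subtractf scaleR_diff_right)
  also have "norm \<dots> \<le> 2 * phi_inf\<^sup>2 * norm (\<theta> - \<theta>')"
    by (rule norm_convex_combination_le)
      (use stationary mean_update_lipschitz in \<open>auto simp: stationary_dist_def\<close>)
  finally show ?thesis .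
qed

lemma update_bias_norm_le: "norm (update_bias \<theta> x) \<le> 2 * grad_bound \<theta>"
  using norm_triangle_ineq4[of "mean_update \<theta> x" "td_gbar \<pi> P r \<gamma> \<phi> \<theta>"]
    mean_update_norm_le[of \<theta> x] td_gbar_norm_le[of \<theta>]
  unfolding update_bias_def by linarith

lemma update_bias_lipschitz:
  "norm (update_bias \<theta> x - update_bias \<theta>' x) \<le> 4 * phi_inf\<^sup>2 * norm (\<theta> - \<theta>')"
proof -
  have "update_bias \<theta> x - update_bias \<theta>' x
      = (mean_update \<theta> x - mean_update \<theta>' x) - (td_gbar \<pi> P r \<gamma> \<phi> \<theta> - td_gbar \<pi> P r \<gamma> \<phi> \<theta>')"
    unfolding update_bias_def by simp
  then have "norm (update_bias \<theta> x - update_bias \<theta>' x)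
      \<le> norm (mean_update \<theta> x - mean_update \<theta>' x) + norm (td_gbar \<pi> P r \<gamma> \<phi> \<theta> - td_gbar \<pi> P r \<gamma> \<phi> \<theta>')"
    by (simp only: norm_triangle_ineq4)
  then show ?thesis
    using mean_update_lipschitz[of \<theta> x \<theta>'] td_gbar_lipschitz[of \<theta> \<theta>'] by linarith
qed

text \<open>Since \<open>g\<^sub>b\<^sub>a\<^sub>r\<close> is the \<open>\<pi>\<close>-average of \<open>mean_update\<close>, averaging the bias over
  \<open>P\<^sup>m(y, \<cdot>)\<close> leaves \<open>\<Sum>\<^sub>s (P\<^sup>m(y, s) - \<pi> s) mean_update \<theta> s\<close>, which the total variation
  bound controls.\<close>

lemma mixed_update_bias_norm_le:
  "norm (\<Sum>s\<in>UNIV. mpow P m y s *\<^sub>R update_bias \<theta> s) \<le> 2 * C * \<alpha> ^ m * grad_bound \<theta>"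
proof -
  have "(\<Sum>s\<in>UNIV. mpow P m y s *\<^sub>R update_bias \<theta> s) = (\<Sum>s\<in>UNIV. (mpow P m y s - \<pi> s) *\<^sub>R mean_update \<theta> s)"
    unfolding update_bias_def td_gbar_eq_mean_update
    by (simp add: scaleR_diff_right scaleR_diff_left sum_subtractf scaleR_sum_left[symmetric]
        mpow_row_sum[OF stochastic])
  also have "norm \<dots> \<le> (\<Sum>s\<in>UNIV. \<bar>mpow P m y s - \<pi> s\<bar> * grad_bound \<theta>)"
    by (intro sum_norm_le) (simp add: mean_update_norm_le mult_left_mono)
  also have "\<dots> = 2 * tv_dist (mpow P m y) \<pi> * grad_bound \<theta>"
    unfolding tv_dist_def by (simp add: sum_distrib_right)
  also have "\<dots> \<le> 2 * (C * \<alpha> ^ m) * grad_bound \<theta>"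
    using geometric_mixing grad_bound_nonneg by (intro mult_right_mono) auto
  finally show ?thesis by simp
qed

lemma td_theta_drift_le:
  assumes "\<And>i. 0 \<le> \<eta> i" "j \<le> k"
  shows "norm (td_theta r \<gamma> \<phi> \<eta> \<omega> k - td_theta r \<gamma> \<phi> \<eta> \<omega> j)
    \<le> (\<Sum>i=j..<k. \<eta> i * grad_bound (td_theta r \<gamma> \<phi> \<eta> \<omega> i))"
  using assms(2)
proof (induction k)
  case (Suc k)
  let ?\<theta> = "td_theta r \<gamma> \<phi> \<eta> \<omega>"
  show ?case
  proof (cases "j = Suc k")
    case False
    then have "j \<le> k" using Suc.prems by simp
    have "?\<theta> (Suc k) - ?\<theta> j = (?\<theta> k - ?\<theta> j) + \<eta> k *\<^sub>R td_g r \<gamma> \<phi> (?\<theta> k) (\<omega> k, \<omega> (Suc k))"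
      by simp
    then have "norm (?\<theta> (Suc k) - ?\<theta> j)
        \<le> norm (?\<theta> k - ?\<theta> j) + \<eta> k * norm (td_g r \<gamma> \<phi> (?\<theta> k) (\<omega> k, \<omega> (Suc k)))"
      using norm_triangle_ineq assms(1)[of k] by (metis abs_of_nonneg norm_scaleR)
    also have "\<dots> \<le> (\<Sum>i=j..<k. \<eta> i * grad_bound (?\<theta> i)) + \<eta> k * grad_bound (?\<theta> k)"
      using Suc.IH[OF \<open>j \<le> k\<close>] td_g_norm_le assms(1)[of k] by (intro add_mono mult_left_mono)
    finally show ?thesis using \<open>j \<le> k\<close> by simp
  qed simp
qed simp

lemma td_bias_eq_update_bias:
  "k \<noteq> 0 \<Longrightarrow> td_bias \<mu>0 P \<pi> r \<gamma> \<phi> \<eta> \<omega> k = update_bias (td_theta r \<gamma> \<phi> \<eta> \<omega> k) (\<omega> k)"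
  unfolding td_bias_def update_bias_def mean_update_def by simp

lemma td_bias_0_norm_le: "norm (td_bias \<mu>0 P \<pi> r \<gamma> \<phi> \<eta> \<omega> 0) \<le> 2 * C * grad_bound 0"
proof -
  have "td_bias \<mu>0 P \<pi> r \<gamma> \<phi> \<eta> \<omega> 0 = (\<Sum>s\<in>UNIV. \<mu>0 s *\<^sub>R update_bias 0 s)"
    unfolding td_bias_def update_bias_def mean_update_def
    by (simp add: scaleR_sum_right scaleR_diff_right sum_subtractf init_sum flip: scaleR_sum_left)
  moreover have "norm (update_bias 0 s) \<le> 2 * C * grad_bound 0" for s
  proof -
    have "mpow P 0 s x *\<^sub>R update_bias 0 x = (if s = x then update_bias 0 x else 0)" for x
      by simp
    then show ?thesis using mixed_update_bias_norm_le[of 0 s 0] by simp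
  qed
  ultimately show ?thesis
    using init_nonneg init_sum by (simp add: norm_convex_combination_le)
qed

lemma update_bias_coupling_le:
  "update_bias \<theta> x \<bullet> (\<theta> - \<theta>s) - update_bias \<theta>' x \<bullet> (\<theta>' - \<theta>s)
    \<le> (2 * grad_bound \<theta> + 4 * phi_inf\<^sup>2 * norm (\<theta>' - \<theta>s)) * norm (\<theta> - \<theta>')"
proof -
  have "update_bias \<theta> x \<bullet> (\<theta> - \<theta>s) - update_bias \<theta>' x \<bullet> (\<theta>' - \<theta>s)
      = (update_bias \<theta> x - update_bias \<theta>' x) \<bullet> (\<theta>' - \<theta>s) + update_bias \<theta> x \<bullet> (\<theta> - \<theta>')"
    by (simp add: algebra_simps inner_diff_left inner_diff_right)
  also have "\<dots> \<le> 4 * phi_inf\<^sup>2 * norm (\<theta> - \<theta>') * norm (\<theta>' - \<theta>s) + 2 * grad_bound \<theta> * norm (\<theta> - \<theta>')"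
    using norm_cauchy_schwarz[of "update_bias \<theta> x - update_bias \<theta>' x" "\<theta>' - \<theta>s"]
      norm_cauchy_schwarz[of "update_bias \<theta> x" "\<theta> - \<theta>'"]
      update_bias_lipschitz[of \<theta> x \<theta>'] update_bias_norm_le[of \<theta> x]
    by (intro add_mono) (meson mult_right_mono norm_ge_zero order_trans)+
  finally show ?thesis by (simp add: algebra_simps)
qed

lemma expected_update_bias_le:
  assumes "depends_upto j \<Theta>" "j \<le> k" "k \<le> N"
  shows "traj_exp \<mu>0 P N (\<lambda>\<omega>. update_bias (\<Theta> \<omega>) (\<omega> k) \<bullet> (\<Theta> \<omega> - \<theta>s))
    \<le> traj_exp \<mu>0 P N (\<lambda>\<omega>. 2 * C * \<alpha> ^ (k - j) * grad_bound (\<Theta> \<omega>) * norm (\<Theta> \<omega> - \<theta>s))"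
proof -
  have "depends_upto j (\<lambda>\<omega>. update_bias (\<Theta> \<omega>) y \<bullet> (\<Theta> \<omega> - \<theta>s))" for y
    using depends_upto_comp[OF assms(1)] .
  from traj_exp_markov[OF stochastic this assms(2,3)]
  have "traj_exp \<mu>0 P N (\<lambda>\<omega>. update_bias (\<Theta> \<omega>) (\<omega> k) \<bullet> (\<Theta> \<omega> - \<theta>s))
      = traj_exp \<mu>0 P N (\<lambda>\<omega>. (\<Sum>s\<in>UNIV. mpow P (k - j) (\<omega> j) s *\<^sub>R update_bias (\<Theta> \<omega>) s) \<bullet> (\<Theta> \<omega> - \<theta>s))"
    by (simp add: inner_sum_left)
  also have "\<dots> \<le> traj_exp \<mu>0 P N (\<lambda>\<omega>. 2 * C * \<alpha> ^ (k - j) * grad_bound (\<Theta> \<omega>) * norm (\<Theta> \<omega> - \<theta>s))"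
    by (intro traj_exp_mono[OF stochastic init_nonneg] order_trans[OF norm_cauchy_schwarz]
        mult_right_mono[OF mixed_update_bias_norm_le] norm_ge_zero)
  finally show ?thesis .
qed

lemma expected_bias_term_le:
  assumes "\<And>i. 0 \<le> \<eta> i" "j \<le> k" "k \<le> N"
  shows "traj_exp \<mu>0 P N (\<lambda>\<omega>. \<eta> k * (td_bias \<mu>0 P \<pi> r \<gamma> \<phi> \<eta> \<omega> k \<bullet> (td_theta r \<gamma> \<phi> \<eta> \<omega> k - \<theta>s)))
    \<le> traj_exp \<mu>0 P N (\<lambda>\<omega>. \<eta> k *
         (2 * C * \<alpha> ^ (k - j) * grad_bound (td_theta r \<gamma> \<phi> \<eta> \<omega> j) * norm (td_theta r \<gamma> \<phi> \<eta> \<omega> j - \<theta>s)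
          + (2 * grad_bound (td_theta r \<gamma> \<phi> \<eta> \<omega> k) + 4 * phi_inf\<^sup>2 * norm (td_theta r \<gamma> \<phi> \<eta> \<omega> j - \<theta>s))
            * (\<Sum>i=j..<k. \<eta> i * grad_bound (td_theta r \<gamma> \<phi> \<eta> \<omega> i))))"
    (is "traj_exp \<mu>0 P N ?lhs \<le> traj_exp \<mu>0 P N (\<lambda>\<omega>. \<eta> k * (?mix \<omega> + ?drift \<omega>))")
proof (cases "k = 0")
  case True
  have "td_bias \<mu>0 P \<pi> r \<gamma> \<phi> \<eta> \<omega> 0 \<bullet> (td_theta r \<gamma> \<phi> \<eta> \<omega> 0 - \<theta>s)
      \<le> 2 * C * grad_bound 0 * norm (td_theta r \<gamma> \<phi> \<eta> \<omega> 0 - \<theta>s)" for \<omega>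
    using norm_cauchy_schwarz td_bias_0_norm_le by (meson mult_right_mono norm_ge_zero order_trans)
  with True assms show ?thesis
    by (intro traj_exp_mono[OF stochastic init_nonneg] mult_left_mono) auto
next
  case False
  let ?\<theta> = "td_theta r \<gamma> \<phi> \<eta>"
  let ?b = "\<lambda>\<omega> i. update_bias (?\<theta> \<omega> i) (\<omega> k) \<bullet> (?\<theta> \<omega> i - \<theta>s)"
  have "?lhs = (\<lambda>\<omega>. \<eta> k * ?b \<omega> j + \<eta> k * (?b \<omega> k - ?b \<omega> j))"
    using False by (simp add: td_bias_eq_update_bias algebra_simps)
  then have "traj_exp \<mu>0 P N ?lhs
      = \<eta> k * traj_exp \<mu>0 P N (\<lambda>\<omega>. ?b \<omega> j) + traj_exp \<mu>0 P N (\<lambda>\<omega>. \<eta> k * (?b \<omega> k - ?b \<omega> j))"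
    by (simp only: traj_exp_add traj_exp_cmult)
  also have "\<dots> \<le> \<eta> k * traj_exp \<mu>0 P N ?mix + traj_exp \<mu>0 P N (\<lambda>\<omega>. \<eta> k * ?drift \<omega>)"
  proof (intro add_mono mult_left_mono)
    show "traj_exp \<mu>0 P N (\<lambda>\<omega>. ?b \<omega> j) \<le> traj_exp \<mu>0 P N ?mix"
      using expected_update_bias_le[OF td_theta_depends_upto assms(2,3)] .
    show "traj_exp \<mu>0 P N (\<lambda>\<omega>. \<eta> k * (?b \<omega> k - ?b \<omega> j)) \<le> traj_exp \<mu>0 P N (\<lambda>\<omega>. \<eta> k * ?drift \<omega>)"
      using assms(1)[of k] grad_bound_nonneg
      by (intro traj_exp_mono[OF stochastic init_nonneg] mult_left_mono order_trans[OF update_bias_coupling_le]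
          td_theta_drift_le assms(1,2)) auto
  qed (use assms(1) in auto)
  also have "\<dots> = traj_exp \<mu>0 P N (\<lambda>\<omega>. \<eta> k * (?mix \<omega> + ?drift \<omega>))"
    by (simp add: traj_exp_add traj_exp_cmult distrib_left)
  finally show ?thesis .
qed

lemma expected_early_bias_terms_le:
  assumes "0 < \<delta>" "2 \<le> T" "K \<subseteq> {..u}" "u \<le> N"
  defines "\<eta> \<equiv> stepsize \<delta> T"
  shows "(\<Sum>k\<in>K. traj_exp \<mu>0 P N (\<lambda>\<omega>. \<eta> k * (td_bias \<mu>0 P \<pi> r \<gamma> \<phi> \<eta> \<omega> k \<bullet> (td_theta r \<gamma> \<phi> \<eta> \<omega> k - \<theta>s))))
    \<le> 8 * C * traj_exp \<mu>0 P N (\<lambda>\<omega>. norm (td_theta r \<gamma> \<phi> \<eta> \<omega> 0 - \<theta>s) * grad_bound (td_theta r \<gamma> \<phi> \<eta> \<omega> 0) *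
          (\<Sum>k=0..u. 1 / (\<delta> * ln (real T) * ln (real k + 3) * sqrt (real k + 1))))
      + 2 / (\<delta>\<^sup>2 * (ln (real T))\<^sup>2) * traj_exp \<mu>0 P N (\<lambda>\<omega>. \<Sum>k=0..u.
          (grad_bound (td_theta r \<gamma> \<phi> \<eta> \<omega> k) + 2 * phi_inf\<^sup>2 * norm (td_theta r \<gamma> \<phi> \<eta> \<omega> 0 - \<theta>s))
            / (sqrt (real k + 1) * ln (real k + 3)) *
          (\<Sum>i=1..k. grad_bound (td_theta r \<gamma> \<phi> \<eta> \<omega> (i - 1)) / (ln (real i + 2) * sqrt (real i))))"
    (is "_ \<le> 8 * C * traj_exp \<mu>0 P N ?A + ?c * traj_exp \<mu>0 P N ?B")
proof -
  let ?\<theta> = "td_theta r \<gamma> \<phi> \<eta>"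
  define F where "F k \<omega> = 8 * C * (norm (?\<theta> \<omega> 0 - \<theta>s) * grad_bound (?\<theta> \<omega> 0) *
          (1 / (\<delta> * ln (real T) * ln (real k + 3) * sqrt (real k + 1))))
      + 2 / (\<delta>\<^sup>2 * (ln (real T))\<^sup>2) * ((grad_bound (?\<theta> \<omega> k) + 2 * phi_inf\<^sup>2 * norm (?\<theta> \<omega> 0 - \<theta>s))
            / (sqrt (real k + 1) * ln (real k + 3)) *
          (\<Sum>i=1..k. grad_bound (?\<theta> \<omega> (i - 1)) / (ln (real i + 2) * sqrt (real i))))" for k \<omega>
  have \<eta>_nonneg: "0 \<le> \<eta> i" for i
    unfolding \<eta>_def using stepsize_pos[OF assms(1,2)] less_imp_le by blast
  have "traj_exp \<mu>0 P N (\<lambda>\<omega>. \<eta> k * (td_bias \<mu>0 P \<pi> r \<gamma> \<phi> \<eta> \<omega> k \<bullet> (?\<theta> \<omega> k - \<theta>s)))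
      \<le> traj_exp \<mu>0 P N (F k)" if "k \<in> K" for k
  proof -
    have "k \<le> N" using that assms(3,4) by auto
    with expected_bias_term_le[OF \<eta>_nonneg, where j = 0 and k = k and N = N and \<theta>s = \<theta>s]
    have "traj_exp \<mu>0 P N (\<lambda>\<omega>. \<eta> k * (td_bias \<mu>0 P \<pi> r \<gamma> \<phi> \<eta> \<omega> k \<bullet> (?\<theta> \<omega> k - \<theta>s)))
      \<le> traj_exp \<mu>0 P N (\<lambda>\<omega>. \<eta> k * (2 * C * \<alpha> ^ k * grad_bound (?\<theta> \<omega> 0) * norm (?\<theta> \<omega> 0 - \<theta>s)
          + (2 * grad_bound (?\<theta> \<omega> k) + 4 * phi_inf\<^sup>2 * norm (?\<theta> \<omega> 0 - \<theta>s))
            * (\<Sum>i=0..<k. \<eta> i * grad_bound (?\<theta> \<omega> i))))"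
      by simp
    also have "\<dots> \<le> traj_exp \<mu>0 P N (F k)"
      unfolding F_def \<eta>_def
      using assms(1,2) grad_bound_nonneg mixing_const_pos mixing_rate_pos mixing_rate_less_1
      by (intro traj_exp_mono[OF stochastic init_nonneg] early_step_bound)
        (auto simp: power_le_one)
    finally show ?thesis .
  qed
  then have "(\<Sum>k\<in>K. traj_exp \<mu>0 P N (\<lambda>\<omega>. \<eta> k * (td_bias \<mu>0 P \<pi> r \<gamma> \<phi> \<eta> \<omega> k \<bullet> (?\<theta> \<omega> k - \<theta>s))))
      \<le> (\<Sum>k\<in>K. traj_exp \<mu>0 P N (F k))"
    by (rule sum_mono)
  also have "\<dots> \<le> (\<Sum>k=0..u. traj_exp \<mu>0 P N (F k))"
  proof (rule sum_mono2)
    show "0 \<le> traj_exp \<mu>0 P N (F k)" for k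
      unfolding F_def using assms(1,2) mixing_const_pos grad_bound_nonneg
      by (intro traj_exp_nonneg[OF stochastic init_nonneg] add_nonneg_nonneg mult_nonneg_nonneg
          divide_nonneg_nonneg sum_nonneg) auto
  qed (use assms(3) in auto)
  also have "\<dots> = traj_exp \<mu>0 P N (\<lambda>\<omega>. \<Sum>k=0..u. F k \<omega>)"
    by (simp add: traj_exp_sum)
  also have "(\<lambda>\<omega>. \<Sum>k=0..u. F k \<omega>) = (\<lambda>\<omega>. 8 * C * ?A \<omega> + ?c * ?B \<omega>)"
    unfolding F_def by (simp add: sum.distrib sum_distrib_left)
  finally show ?thesis
    by (simp only: traj_exp_add traj_exp_cmult)
qed

lemma expected_late_bias_terms_le:
  assumes "0 < \<delta>" "2 \<le> T" "C * \<alpha> ^ u \<le> 1 / sqrt (real t)" "t - 1 \<le> N"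
  defines "\<eta> \<equiv> stepsize \<delta> T"
  shows "(\<Sum>k=u+1..t-1. traj_exp \<mu>0 P N (\<lambda>\<omega>. \<eta> k * (td_bias \<mu>0 P \<pi> r \<gamma> \<phi> \<eta> \<omega> k \<bullet> (td_theta r \<gamma> \<phi> \<eta> \<omega> k - \<theta>s))))
    \<le> 8 * traj_exp \<mu>0 P N (\<lambda>\<omega>. \<Sum>k=u+1..t-1.
          norm (td_theta r \<gamma> \<phi> \<eta> \<omega> (k - u) - \<theta>s) * grad_bound (td_theta r \<gamma> \<phi> \<eta> \<omega> (k - u)) /
          (\<delta> * ln (real T) * ln (real k + 3) * sqrt (real k + 1) * sqrt (real t)))
      + 2 / (\<delta>\<^sup>2 * (ln (real T))\<^sup>2) * traj_exp \<mu>0 P N (\<lambda>\<omega>. \<Sum>k=u+1..t-1.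
          (grad_bound (td_theta r \<gamma> \<phi> \<eta> \<omega> k) + 2 * phi_inf\<^sup>2 * norm (td_theta r \<gamma> \<phi> \<eta> \<omega> (k - u) - \<theta>s))
            / (ln (real k + 3) * ln (real (k - u) + 3) * sqrt (real k + 1)) *
          (\<Sum>i=k-u+1..k. grad_bound (td_theta r \<gamma> \<phi> \<eta> \<omega> (i - 1)) / sqrt (real i)))"
    (is "_ \<le> 8 * traj_exp \<mu>0 P N ?A + ?c * traj_exp \<mu>0 P N ?B")
proof -
  let ?\<theta> = "td_theta r \<gamma> \<phi> \<eta>"
  define F where "F k \<omega> = 8 * (norm (?\<theta> \<omega> (k - u) - \<theta>s) * grad_bound (?\<theta> \<omega> (k - u)) /
          (\<delta> * ln (real T) * ln (real k + 3) * sqrt (real k + 1) * sqrt (real t)))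
      + 2 / (\<delta>\<^sup>2 * (ln (real T))\<^sup>2) * ((grad_bound (?\<theta> \<omega> k) + 2 * phi_inf\<^sup>2 * norm (?\<theta> \<omega> (k - u) - \<theta>s))
            / (ln (real k + 3) * ln (real (k - u) + 3) * sqrt (real k + 1)) *
          (\<Sum>i=k-u+1..k. grad_bound (?\<theta> \<omega> (i - 1)) / sqrt (real i)))" for k \<omega>
  have \<eta>_nonneg: "0 \<le> \<eta> i" for i
    unfolding \<eta>_def using stepsize_pos[OF assms(1,2)] less_imp_le by blast
  have "traj_exp \<mu>0 P N (\<lambda>\<omega>. \<eta> k * (td_bias \<mu>0 P \<pi> r \<gamma> \<phi> \<eta> \<omega> k \<bullet> (?\<theta> \<omega> k - \<theta>s)))
      \<le> traj_exp \<mu>0 P N (F k)" if "k \<in> {u+1..t-1}" for k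
  proof -
    have "k \<le> N" "k - (k - u) = u" using that assms(4) by auto
    with expected_bias_term_le[OF \<eta>_nonneg, where j = "k - u" and k = k and N = N and \<theta>s = \<theta>s]
    have "traj_exp \<mu>0 P N (\<lambda>\<omega>. \<eta> k * (td_bias \<mu>0 P \<pi> r \<gamma> \<phi> \<eta> \<omega> k \<bullet> (?\<theta> \<omega> k - \<theta>s)))
      \<le> traj_exp \<mu>0 P N (\<lambda>\<omega>. \<eta> k * (2 * C * \<alpha> ^ u * grad_bound (?\<theta> \<omega> (k - u)) * norm (?\<theta> \<omega> (k - u) - \<theta>s)
          + (2 * grad_bound (?\<theta> \<omega> k) + 4 * phi_inf\<^sup>2 * norm (?\<theta> \<omega> (k - u) - \<theta>s))
            * (\<Sum>i=k-u..<k. \<eta> i * grad_bound (?\<theta> \<omega> i))))"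
      using that by simp
    also have "\<dots> \<le> traj_exp \<mu>0 P N (F k)"
      unfolding F_def \<eta>_def
      using assms(1,2,3) grad_bound_nonneg mixing_const_pos mixing_rate_pos
      by (intro traj_exp_mono[OF stochastic init_nonneg] late_step_bound) auto
    finally show ?thesis .
  qed
  then have "(\<Sum>k=u+1..t-1. traj_exp \<mu>0 P N (\<lambda>\<omega>. \<eta> k * (td_bias \<mu>0 P \<pi> r \<gamma> \<phi> \<eta> \<omega> k \<bullet> (?\<theta> \<omega> k - \<theta>s))))
      \<le> (\<Sum>k=u+1..t-1. traj_exp \<mu>0 P N (F k))"
    by (rule sum_mono)
  also have "\<dots> = traj_exp \<mu>0 P N (\<lambda>\<omega>. \<Sum>k=u+1..t-1. F k \<omega>)"
    by (simp add: traj_exp_sum)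
  also have "(\<lambda>\<omega>. \<Sum>k=u+1..t-1. F k \<omega>) = (\<lambda>\<omega>. 8 * ?A \<omega> + ?c * ?B \<omega>)"
    unfolding F_def by (simp add: sum.distrib sum_distrib_left)
  finally show ?thesis
    by (simp only: traj_exp_add traj_exp_cmult)
qed

end

theorem lemmaB1:
  fixes P :: "'s::finite \<Rightarrow> 's \<Rightarrow> real" and \<pi> \<mu>0 :: "'s \<Rightarrow> real"
    and C \<alpha> r_inf \<gamma> phi_inf \<delta> :: real and r :: "'s \<Rightarrow> 's \<Rightarrow> real"
    and \<phi> :: "'s \<Rightarrow> 'v::euclidean_space" and \<theta>s :: 'v and T t :: nat
  assumes "stochastic P" and "irreducible_chain P" and "aperiodic_chain P"
    and "stationary_dist P \<pi>"
    and "C > 0" and "0 < \<alpha>" and "\<alpha> < 1"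
    and "\<forall>s n. tv_dist (mpow P n s) \<pi> \<le> C * \<alpha> ^ n"
    and "\<forall>s s'. 0 \<le> r s s' \<and> r s s' \<le> r_inf"
    and "0 < \<gamma>" and "\<gamma> < 1"
    and "\<forall>s. norm (\<phi> s) \<le> phi_inf"
    and "td_gbar \<pi> P r \<gamma> \<phi> \<theta>s = 0"
    and "\<forall>s. 0 \<le> \<mu>0 s" and "(\<Sum>s\<in>UNIV. \<mu>0 s) = 1"
    and "\<delta> > 0" and "T \<ge> 2" and "1 \<le> t" and "t \<le> T"
  defines "u \<equiv> mix_u C \<alpha> t"
    and "\<theta> \<equiv> (\<lambda>\<omega> k. td_theta r \<gamma> \<phi> (stepsize \<delta> T) \<omega> k)"
    and "d \<equiv> (\<lambda>\<omega> k. norm (td_theta r \<gamma> \<phi> (stepsize \<delta> T) \<omega> k - \<theta>s))"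
    and "ell \<equiv> (\<lambda>\<omega> k. r_inf * phi_inf + 2 * phi_inf\<^sup>2 * norm (td_theta r \<gamma> \<phi> (stepsize \<delta> T) \<omega> k))"
    and "b \<equiv> (\<lambda>\<omega> k. td_bias \<mu>0 P \<pi> r \<gamma> \<phi> (stepsize \<delta> T) \<omega> k)"
    and "E \<equiv> traj_exp \<mu>0 P (t + mix_u C \<alpha> t)"
  shows "E (\<lambda>\<omega>. \<Sum>k<t. stepsize \<delta> T k * (b \<omega> k \<bullet> (\<theta> \<omega> k - \<theta>s)))
      \<le> 8 * C * E (\<lambda>\<omega>. d \<omega> 0 * ell \<omega> 0 *
              (\<Sum>k=0..u. 1 / (\<delta> * ln (real T) * ln (real k + 3) * sqrt (real k + 1))))
        + 8 * E (\<lambda>\<omega>. \<Sum>k=u+1..t-1. d \<omega> (k - u) * ell \<omega> (k - u) /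
              (\<delta> * ln (real T) * ln (real k + 3) * sqrt (real k + 1) * sqrt (real t)))
        + 2 / (\<delta>\<^sup>2 * (ln (real T))\<^sup>2) * E (\<lambda>\<omega>. \<Sum>k=0..u.
              (ell \<omega> k + 2 * phi_inf\<^sup>2 * d \<omega> 0) / (sqrt (real k + 1) * ln (real k + 3)) *
              (\<Sum>i=1..k. ell \<omega> (i - 1) / (ln (real i + 2) * sqrt (real i))))
        + 2 / (\<delta>\<^sup>2 * (ln (real T))\<^sup>2) * E (\<lambda>\<omega>. \<Sum>k=u+1..t-1.
              (ell \<omega> k + 2 * phi_inf\<^sup>2 * d \<omega> (k - u)) /
                (ln (real k + 3) * ln (real (k - u) + 3) * sqrt (real k + 1)) *
              (\<Sum>i=k-u+1..k. ell \<omega> (i - 1) / sqrt (real i)))"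
proof -
  interpret td_setting P \<pi> \<mu>0 r \<gamma> r_inf phi_inf C \<alpha> \<phi>
    using assms by unfold_locales auto
  let ?X = "\<lambda>k. E (\<lambda>\<omega>. stepsize \<delta> T k * (b \<omega> k \<bullet> (\<theta> \<omega> k - \<theta>s)))"
  have "{..<t} = ({..<t} \<inter> {..u}) \<union> {u+1..t-1}" "({..<t} \<inter> {..u}) \<inter> {u+1..t-1} = {}"
    using \<open>1 \<le> t\<close> by auto
  then have split: "E (\<lambda>\<omega>. \<Sum>k<t. stepsize \<delta> T k * (b \<omega> k \<bullet> (\<theta> \<omega> k - \<theta>s)))
      = (\<Sum>k\<in>{..<t} \<inter> {..u}. ?X k) + (\<Sum>k=u+1..t-1. ?X k)"
    unfolding E_def by (simp add: traj_exp_sum flip: sum.union_disjoint)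
  have mixed: "C * \<alpha> ^ u \<le> 1 / sqrt (real t)"
    unfolding u_def using assms by (intro mix_u_geometric_le) auto
  have horizon: "{..<t} \<inter> {..u} \<subseteq> {..u}" "u \<le> t + u" "t - 1 \<le> t + u"
    by auto
  show ?thesis
    using split expected_early_bias_terms_le[OF assms(16,17) horizon(1,2), where \<theta>s = \<theta>s]
      expected_late_bias_terms_le[OF assms(16,17) mixed horizon(3), where \<theta>s = \<theta>s]
    unfolding E_def u_def \<theta>_def d_def ell_def b_def grad_bound_def by linarith
qed

end
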